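(* For all $n\ge 1$, $\left|\mathrm{Av}_n[\overline{13}42]\right|=D_{n+1}$, where $D_1=2$, $D_2=1$, $D_3=1$ and $D_n=\sum_{k=1}^{n-3}D_kD_{n-k}$ for $n\ge 4$.
   Context: For $\sigma\in S_n$, the cyclic permutation $[\sigma]$ is the set of all rotations of $\sigma$; $[S_n]$ is the set of cyclic permutations of length $n$. $[\sigma]$ contains the vincular pattern $[\overline{13}42]$ if some rotation of $\sigma$ has entries $a,b,c,d$ appearing in this order with $a,b$ adjacent and $a<d<b<c$; $\mathrm{Av}_n[\overline{13}42]$ is the set of $[\sigma]\in[S_n]$ not containing it. *)

theory Defs
  imports Main "HOL-Combinatorics.Multiset_Permutations"
begin

definition cyc_class :: "nat list \<Rightarrow> nat list set" where
  "cyc_class \<sigma> = {rotate k \<sigma> | k. True}"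

text \<open>Linear containment of the vincular pattern 1342 with the first two entries adjacent.\<close>
definition contains_v1342 :: "nat list \<Rightarrow> bool" where
  "contains_v1342 \<tau> \<longleftrightarrow> (\<exists>i k l. i + 1 < k \<and> k < l \<and> l < length \<tau> \<and>
      \<tau> ! i < \<tau> ! l \<and> \<tau> ! l < \<tau> ! (i+1) \<and> \<tau> ! (i+1) < \<tau> ! k)"

definition cyc_contains_v1342 :: "nat list \<Rightarrow> bool" where
  "cyc_contains_v1342 \<sigma> \<longleftrightarrow> (\<exists>\<tau>\<in>cyc_class \<sigma>. contains_v1342 \<tau>)"

definition Av_cyc_v1342 :: "nat \<Rightarrow> nat list set set" where
  "Av_cyc_v1342 n = {cyc_class \<sigma> | \<sigma>. \<sigma> \<in> permutations_of_set {1..n} \<and> \<not> cyc_contains_v1342 \<sigma>}"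

function D :: "nat \<Rightarrow> nat" where
  "D n = (if n = 0 then 0 else if n = 1 then 2 else if n \<le> 3 then 1
          else (\<Sum>k\<in>{1..n-3}. D k * D (n - k)))"
  by auto
termination
  by (relation "measure id") auto

end

theory Submission
  imports Defs
begin

(* Rotate a cyclic permutation of {a..b}, with n = b - a + 1, so that it starts at its
   minimum a and write it as a y w.  Avoidance at the adjacent pair (a, y) says exactly that
   w = L H with L < y < H.  Since a lies below all other entries, the other adjacent pairs of
   a y L H behave as in the cycle y L H, and that cycle avoids the pattern iff the cycles y L
   and H do and H starts with its maximum b.  Hence the second entries y = a + 1 (L empty) and
   y = b (H empty) contribute D_n each, and y = a + j with 1 < j < n - 1 contributes
   D_(j+1) D_(n-j): this is the recurrence of D_(n+1). *)

section \<open>Occurrences starting at an adjacent pair\<close>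

(* a, b, c, d play the roles of 1, 3, 4, 2 in an occurrence of the pattern. *)
fun completes_v1342 :: "nat \<Rightarrow> nat \<Rightarrow> nat list \<Rightarrow> bool" where
  "completes_v1342 a b [] \<longleftrightarrow> False"
| "completes_v1342 a b (c # w) \<longleftrightarrow>
     (b < c \<and> (\<exists>d\<in>set w. a < d \<and> d < b)) \<or> completes_v1342 a b w"

lemma completes_v1342_iff_nth:
  "completes_v1342 a b w \<longleftrightarrow>
     (\<exists>k l. k < l \<and> l < length w \<and> b < w ! k \<and> a < w ! l \<and> w ! l < b)"
proof (induction w)
  case (Cons c w)
  show ?case
  proof
    assume "completes_v1342 a b (c # w)"
    then consider "b < c" "\<exists>d\<in>set w. a < d \<and> d < b" | "completes_v1342 a b w"
      by auto
    then show "\<exists>k l. k < l \<and> l < length (c # w) \<and> b < (c # w) ! k \<and>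
        a < (c # w) ! l \<and> (c # w) ! l < b"
    proof cases
      case 1
      then obtain l where "l < length w" "a < w ! l" "w ! l < b"
        by (auto simp: in_set_conv_nth)
      with \<open>b < c\<close> show ?thesis by (intro exI[of _ 0] exI[of _ "Suc l"]) auto
    next
      case 2
      then obtain k l where "k < l" "l < length w" "b < w ! k" "a < w ! l" "w ! l < b"
        using Cons.IH by blast
      then show ?thesis by (intro exI[of _ "Suc k"] exI[of _ "Suc l"]) auto
    qed
  next
    assume "\<exists>k l. k < l \<and> l < length (c # w) \<and> b < (c # w) ! k \<and>
        a < (c # w) ! l \<and> (c # w) ! l < b"
    then obtain k l where kl: "k < l" "l < length (c # w)" "b < (c # w) ! k"
        "a < (c # w) ! l" "(c # w) ! l < b"
      by blast
    then obtain l' where l: "l = Suc l'" by (cases l) auto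
    show "completes_v1342 a b (c # w)"
    proof (cases k)
      case 0
      then show ?thesis using kl l by (auto intro!: bexI[of _ "w ! l'"])
    next
      case (Suc k')
      then show ?thesis using kl l Cons.IH by auto
    qed
  qed
qed simp

lemma completes_v1342_append:
  "completes_v1342 a b (u @ v) \<longleftrightarrow> completes_v1342 a b u \<or> completes_v1342 a b v \<or>
     (\<exists>c\<in>set u. b < c) \<and> (\<exists>d\<in>set v. a < d \<and> d < b)"
  by (induction u) auto

lemma completes_v1342_above:
  "completes_v1342 a b w \<Longrightarrow> \<exists>c\<in>set w. b < c"
  by (induction w) auto

lemma completes_v1342_between:
  "completes_v1342 a b w \<Longrightarrow> \<exists>d\<in>set w. a < d \<and> d < b"
  by (induction w) auto

lemma completes_v1342_mono:
  "completes_v1342 a b w \<Longrightarrow> a' \<le> a \<Longrightarrow> completes_v1342 a' b w"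
  by (induction w) (auto intro: le_less_trans)

lemma completes_v1342_insert_small:
  "\<forall>x\<in>set X. x \<le> a \<Longrightarrow> completes_v1342 a b (u @ X @ v) \<longleftrightarrow> completes_v1342 a b (u @ v)"
  by (fastforce simp: completes_v1342_append dest: completes_v1342_between)

lemma completes_v1342_insert_large:
  "\<forall>x\<in>set X. b < x \<Longrightarrow> b < c \<Longrightarrow>
     completes_v1342 a b (u @ X @ c # v) \<longleftrightarrow> completes_v1342 a b (u @ c # v)"
  by (fastforce simp: completes_v1342_append dest: completes_v1342_between)

fun starts_with_v1342 :: "nat list \<Rightarrow> bool" where
  "starts_with_v1342 (a # b # w) \<longleftrightarrow> a < b \<and> completes_v1342 a b w"
| "starts_with_v1342 _ \<longleftrightarrow> False"

lemma starts_with_v1342_append: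
  "starts_with_v1342 \<tau> \<Longrightarrow> starts_with_v1342 (\<tau> @ \<sigma>)"
  by (cases \<tau> rule: starts_with_v1342.cases) (auto simp: completes_v1342_append)

lemma starts_with_v1342_above:
  "starts_with_v1342 (a # b # w) \<Longrightarrow> \<exists>c\<in>set w. b < c"
  by (auto dest: completes_v1342_above)

lemma contains_v1342_iff_drop:
  "contains_v1342 \<tau> \<longleftrightarrow> (\<exists>i. starts_with_v1342 (drop i \<tau>))"
proof
  assume "contains_v1342 \<tau>"
  then obtain i k l where ikl: "i + 1 < k" "k < l" "l < length \<tau>"
      "\<tau> ! i < \<tau> ! l" "\<tau> ! l < \<tau> ! (i+1)" "\<tau> ! (i+1) < \<tau> ! k"
    unfolding contains_v1342_def by blast
  obtain k' l' where k: "k = i + 2 + k'" and l: "l = i + 2 + l'"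
    using ikl(1,2) by (intro that[of "k - (i + 2)" "l - (i + 2)"]) auto
  have "completes_v1342 (\<tau> ! i) (\<tau> ! (i+1)) (drop (i+2) \<tau>)"
    unfolding completes_v1342_iff_nth using ikl unfolding k l
    by (intro exI[of _ k'] exI[of _ l']) simp
  moreover have "drop i \<tau> = \<tau> ! i # \<tau> ! (i+1) # drop (i+2) \<tau>"
    using ikl by (simp add: Cons_nth_drop_Suc)
  ultimately have "starts_with_v1342 (drop i \<tau>)"
    using ikl by simp
  then show "\<exists>i. starts_with_v1342 (drop i \<tau>)" ..
next
  assume "\<exists>i. starts_with_v1342 (drop i \<tau>)"
  then obtain i a b w where abw: "drop i \<tau> = a # b # w" "a < b" "completes_v1342 a b w"
    by (metis starts_with_v1342.elims(2))
  then obtain k l where kl: "k < l" "l < length w" "b < w ! k" "a < w ! l" "w ! l < b"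
    unfolding completes_v1342_iff_nth by blast
  have "i \<le> length \<tau>"
    using abw(1) by (cases "i \<le> length \<tau>") auto
  then have nth: "\<tau> ! (i + j) = (a # b # w) ! j" for j
    using abw(1) by (metis nth_drop)
  have "length \<tau> = i + length (a # b # w)"
    using abw(1) \<open>i \<le> length \<tau>\<close> by (metis le_add_diff_inverse length_drop)
  then show "contains_v1342 \<tau>"
    unfolding contains_v1342_def using abw kl nth[of 0] nth[of 1] nth[of "2 + k"] nth[of "2 + l"]
    by (intro exI[of _ i] exI[of _ "i + 2 + k"] exI[of _ "i + 2 + l"]) (simp add: add.assoc)
qed

lemma not_completes_v1342_iff_dropWhile:
  assumes "\<forall>x\<in>set w. a < x \<and> x \<noteq> b"
  shows "\<not> completes_v1342 a b w \<longleftrightarrow> (\<forall>h\<in>set (dropWhile (\<lambda>x. x < b) w). b < h)"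
  using assms
proof (induction w)
  case (Cons x w)
  show ?case
  proof (cases "x < b")
    case True
    then show ?thesis
      using Cons by simp
  next
    case False
    then have "b < x"
      using Cons.prems by auto
    have "\<not> completes_v1342 a b (x # w) \<longleftrightarrow> (\<forall>d\<in>set w. \<not> (a < d \<and> d < b))"
      using \<open>b < x\<close> by (auto dest: completes_v1342_between)
    also have "\<dots> \<longleftrightarrow> (\<forall>h\<in>set (x # w). b < h)"
      using Cons.prems \<open>b < x\<close> by (auto simp: nat_neq_iff)
    finally show ?thesis
      using False by simp
  qed
qed simp

lemma not_completes_v1342_iff_split:
  assumes "\<forall>x\<in>set w. a < x \<and> x \<noteq> b"
  shows "\<not> completes_v1342 a b w \<longleftrightarrow>
    (\<exists>L H. w = L @ H \<and> (\<forall>l\<in>set L. l < b) \<and> (\<forall>h\<in>set H. b < h))"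
proof
  assume "\<not> completes_v1342 a b w"
  then have "\<forall>h\<in>set (dropWhile (\<lambda>x. x < b) w). b < h"
    using not_completes_v1342_iff_dropWhile[OF assms] by simp
  then have "w = takeWhile (\<lambda>x. x < b) w @ dropWhile (\<lambda>x. x < b) w \<and>
      (\<forall>l\<in>set (takeWhile (\<lambda>x. x < b) w). l < b) \<and>
      (\<forall>h\<in>set (dropWhile (\<lambda>x. x < b) w). b < h)"
    by (auto dest: set_takeWhileD)
  then show "\<exists>L H. w = L @ H \<and> (\<forall>l\<in>set L. l < b) \<and> (\<forall>h\<in>set H. b < h)"
    by blast
next
  assume "\<exists>L H. w = L @ H \<and> (\<forall>l\<in>set L. l < b) \<and> (\<forall>h\<in>set H. b < h)"
  then obtain L H where "w = L @ H" "\<forall>l\<in>set L. l < b" "\<forall>h\<in>set H. b < h"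
    by blast
  then show "\<not> completes_v1342 a b w"
    by (fastforce simp: completes_v1342_append dest: completes_v1342_above completes_v1342_between)
qed

section \<open>Cyclic avoidance, pair by pair\<close>

(* inner_pairs_avoid A X: no rotation of the cyclic word A X that begins with two consecutive
   entries of A starts with an occurrence.  The recursion moves the entries of A already
   visited to the end of the second argument. *)
fun inner_pairs_avoid :: "nat list \<Rightarrow> nat list \<Rightarrow> bool" where
  "inner_pairs_avoid (a # b # A) X \<longleftrightarrow>
     \<not> starts_with_v1342 (a # b # A @ X) \<and> inner_pairs_avoid (b # A) (X @ [a])"
| "inner_pairs_avoid _ X \<longleftrightarrow> True"

(* The second conjunct covers the pair formed by the last and the first entry. *)
definition cyc_avoids_v1342 :: "nat list \<Rightarrow> bool" where
  "cyc_avoids_v1342 xs \<longleftrightarrow>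
     inner_pairs_avoid xs [] \<and> \<not> starts_with_v1342 (last xs # butlast xs)"

lemma inner_pairs_avoid_append:
  "A \<noteq> [] \<Longrightarrow> B \<noteq> [] \<Longrightarrow> inner_pairs_avoid (A @ B) X \<longleftrightarrow>
     inner_pairs_avoid A (B @ X) \<and> \<not> starts_with_v1342 (last A # B @ X @ butlast A) \<and>
     inner_pairs_avoid B (X @ A)"
proof (induction A arbitrary: X)
  case (Cons a A)
  show ?case
  proof (cases "A = []")
    case True
    then show ?thesis using Cons.prems by (cases B) auto
  next
    case False
    then obtain a' A' where "A = a' # A'" by (cases A) auto
    then show ?thesis using Cons.IH[of "X @ [a]"] Cons.prems by auto
  qed
qed simp

lemma cyc_avoids_v1342_append:
  "A \<noteq> [] \<Longrightarrow> B \<noteq> [] \<Longrightarrow> cyc_avoids_v1342 (A @ B) \<longleftrightarrow>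
     inner_pairs_avoid A B \<and> inner_pairs_avoid B A \<and>
     \<not> starts_with_v1342 (last A # B @ butlast A) \<and> \<not> starts_with_v1342 (last B # A @ butlast B)"
  by (auto simp: cyc_avoids_v1342_def inner_pairs_avoid_append butlast_append)

lemma cyc_avoids_v1342_swap: "cyc_avoids_v1342 (A @ B) \<longleftrightarrow> cyc_avoids_v1342 (B @ A)"
  by (cases "A = [] \<or> B = []") (auto simp: cyc_avoids_v1342_append)

lemma cyc_avoids_v1342_rotate: "cyc_avoids_v1342 (rotate k xs) \<longleftrightarrow> cyc_avoids_v1342 xs"
  by (metis append_take_drop_id cyc_avoids_v1342_swap rotate_drop_take)

lemma not_inner_pairs_avoid_rotate:
  "\<not> inner_pairs_avoid A X \<Longrightarrow> \<exists>k. starts_with_v1342 (rotate k (A @ X))"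
proof (induction A X rule: inner_pairs_avoid.induct)
  case (1 a b A X)
  show ?case
  proof (cases "starts_with_v1342 (a # b # A @ X)")
    case True
    then show ?thesis by (intro exI[of _ 0]) simp
  next
    case False
    then obtain k where "starts_with_v1342 (rotate k (b # A @ X @ [a]))"
      using 1 by auto
    moreover have "rotate k (b # A @ X @ [a]) = rotate (Suc k) ((a # b # A) @ X)"
      by (simp add: rotate1_rotate_swap)
    ultimately show ?thesis by metis
  qed
qed simp_all

lemma cyc_avoids_v1342_iff_rotate:
  "cyc_avoids_v1342 xs \<longleftrightarrow> (\<forall>k. \<not> starts_with_v1342 (rotate k xs))"
proof
  assume avoids: "cyc_avoids_v1342 xs"
  show "\<forall>k. \<not> starts_with_v1342 (rotate k xs)"
  proof
    fix k
    have "cyc_avoids_v1342 (rotate k xs)"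
      using avoids cyc_avoids_v1342_rotate by simp
    then show "\<not> starts_with_v1342 (rotate k xs)"
      by (cases "rotate k xs" rule: starts_with_v1342.cases) (auto simp: cyc_avoids_v1342_def)
  qed
next
  assume no_start: "\<forall>k. \<not> starts_with_v1342 (rotate k xs)"
  show "cyc_avoids_v1342 xs"
  proof (cases xs rule: rev_cases)
    case Nil
    then show ?thesis by (simp add: cyc_avoids_v1342_def)
  next
    case (snoc ys y)
    then have "last xs # butlast xs = rotate (length ys) xs"
      by (simp add: rotate_append)
    then show ?thesis
      using no_start not_inner_pairs_avoid_rotate[of xs "[]"] by (auto simp: cyc_avoids_v1342_def)
  qed
qed

lemma cyc_contains_v1342_iff_rotate:
  "cyc_contains_v1342 xs \<longleftrightarrow> (\<exists>k. starts_with_v1342 (rotate k xs))"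
proof
  assume "cyc_contains_v1342 xs"
  then obtain k i where start: "starts_with_v1342 (drop i (rotate k xs))"
    unfolding cyc_contains_v1342_def cyc_class_def contains_v1342_iff_drop by blast
  have "i < length (rotate k xs)"
  proof (rule ccontr)
    assume "\<not> i < length (rotate k xs)"
    then have "drop i (rotate k xs) = []" by simp
    with start show False by simp
  qed
  then have "rotate i (rotate k xs) = drop i (rotate k xs) @ take i (rotate k xs)"
    by (simp add: rotate_drop_take)
  then have "starts_with_v1342 (rotate (i + k) xs)"
    using starts_with_v1342_append[OF start] by (simp add: rotate_rotate)
  then show "\<exists>k. starts_with_v1342 (rotate k xs)" ..
next
  assume "\<exists>k. starts_with_v1342 (rotate k xs)"
  then obtain k where "starts_with_v1342 (drop 0 (rotate k xs))" by auto
  then have "contains_v1342 (rotate k xs)"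
    unfolding contains_v1342_iff_drop ..
  then show "cyc_contains_v1342 xs"
    unfolding cyc_contains_v1342_def cyc_class_def by blast
qed

corollary cyc_avoids_v1342_iff: "cyc_avoids_v1342 xs \<longleftrightarrow> \<not> cyc_contains_v1342 xs"
  by (simp add: cyc_avoids_v1342_iff_rotate cyc_contains_v1342_iff_rotate)

lemma inner_pairs_avoid_insert_small:
  "\<forall>x\<in>set X. \<forall>z\<in>set A. x \<le> z \<Longrightarrow>
     inner_pairs_avoid A (X @ Y) \<longleftrightarrow> inner_pairs_avoid A Y"
proof (induction A Y rule: inner_pairs_avoid.induct)
  case (1 a b A Y)
  then show ?case using completes_v1342_insert_small[of X a b A Y] by auto
qed simp_all

lemma inner_pairs_avoid_insert_large:
  "\<forall>x\<in>set X. \<forall>z\<in>set A. z < x \<Longrightarrow> \<forall>z\<in>set A. z < c \<Longrightarrow>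
     inner_pairs_avoid A (X @ c # Y) \<longleftrightarrow> inner_pairs_avoid A (c # Y)"
proof (induction A Y rule: inner_pairs_avoid.induct)
  case (1 a b A Y)
  then show ?case using completes_v1342_insert_large[of X b c a A Y] by auto
qed simp_all

lemma cyc_avoids_v1342_hd_max:
  assumes "\<forall>x\<in>set xs. x \<le> hd xs"
  shows "cyc_avoids_v1342 xs \<longleftrightarrow> inner_pairs_avoid xs []"
proof (cases xs)
  case (Cons x w)
  show ?thesis
  proof (cases "w = []")
    case False
    have "\<forall>c\<in>set w. c \<le> x"
      using assms Cons by simp
    then have "\<not> starts_with_v1342 (last w # x # butlast w)"
      using starts_with_v1342_above[of "last w" x "butlast w"]
      by (meson in_set_butlastD leD)
    then show ?thesis
      using Cons False by (simp add: cyc_avoids_v1342_def)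
  qed (simp add: cyc_avoids_v1342_def Cons)
qed (simp add: cyc_avoids_v1342_def)

lemma cyc_avoids_v1342_Cons_min:
  assumes min: "\<forall>x\<in>set B. m < x" and "B \<noteq> []"
  shows "cyc_avoids_v1342 (m # B) \<longleftrightarrow>
    cyc_avoids_v1342 B \<and> \<not> completes_v1342 m (hd B) (tl B)"
proof -
  obtain b w where B: "B = b # w"
    using \<open>B \<noteq> []\<close> by (cases B) auto
  have "m < last B"
    using min \<open>B \<noteq> []\<close> by simp
  moreover have "starts_with_v1342 (m # B) \<longleftrightarrow> completes_v1342 m b w"
    using min B by simp
  moreover have "inner_pairs_avoid B [m] \<longleftrightarrow> inner_pairs_avoid B []"
    using inner_pairs_avoid_insert_small[of "[m]" B "[]"] min by (simp add: less_imp_le)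
  moreover have "cyc_avoids_v1342 ([m] @ B) \<longleftrightarrow> inner_pairs_avoid B [m] \<and>
      \<not> starts_with_v1342 (m # B) \<and> \<not> starts_with_v1342 (last B # m # butlast B)"
    using cyc_avoids_v1342_append[of "[m]" B] \<open>B \<noteq> []\<close> by simp
  ultimately have "cyc_avoids_v1342 (m # B) \<longleftrightarrow>
      inner_pairs_avoid B [] \<and> \<not> completes_v1342 m b w"
    by simp
  moreover have "\<not> starts_with_v1342 (last B # butlast B)" if "\<not> completes_v1342 m b w"
  proof
    assume start: "starts_with_v1342 (last B # butlast B)"
    then obtain w' z where w: "w = w' @ [z]"
      using B by (cases w rule: rev_cases) auto
    then have "z < b" and "completes_v1342 z b w'"
      using start B by auto
    then have "completes_v1342 m b w"
      using completes_v1342_mono[of z b w' m] min B w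
      by (auto simp: completes_v1342_append)
    with that show False ..
  qed
  ultimately show ?thesis
    using B by (auto simp: cyc_avoids_v1342_def)
qed

lemma cyc_avoids_v1342_split:
  assumes "L \<noteq> []" "H \<noteq> []" and L: "\<forall>l\<in>set L. l < y" and H: "\<forall>h\<in>set H. y < h"
  shows "cyc_avoids_v1342 (y # L @ H) \<longleftrightarrow>
    cyc_avoids_v1342 (y # L) \<and> (\<forall>h\<in>set H. h \<le> hd H) \<and> cyc_avoids_v1342 H"
proof -
  obtain h H' where H': "H = h # H'"
    using \<open>H \<noteq> []\<close> by (cases H) auto
  have inner_L: "inner_pairs_avoid (y # L) H \<longleftrightarrow> inner_pairs_avoid (y # L) []"
  proof -
    obtain l L' where "L = l # L'"
      using \<open>L \<noteq> []\<close> by (cases L) auto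
    moreover have "inner_pairs_avoid L (H @ [y]) \<longleftrightarrow> inner_pairs_avoid L [y]"
      using inner_pairs_avoid_insert_large[of H L y "[]"] L H by fastforce
    ultimately show ?thesis
      using L by simp
  qed
  have inner_H: "inner_pairs_avoid H (y # L) \<longleftrightarrow> inner_pairs_avoid H []"
    using inner_pairs_avoid_insert_small[of "y # L" H "[]"] L H by fastforce
  have junction:
    "starts_with_v1342 (last L # H @ y # butlast L) \<longleftrightarrow> \<not> (\<forall>x\<in>set H. x \<le> h)"
  proof -
    have below_h: "\<forall>c\<in>set (y # butlast L). c < h"
      using L H H' by (force dest: in_set_butlastD)
    then have "\<not> completes_v1342 (last L) h (y # butlast L)"
      by (meson completes_v1342_above less_asym)
    moreover have "last L < y"
      using L \<open>L \<noteq> []\<close> by simp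
    ultimately show ?thesis
      using H' below_h completes_v1342_above[of "last L" h H']
      by (auto simp: completes_v1342_append not_le)
  qed
  have avoids_L: "cyc_avoids_v1342 (y # L) \<longleftrightarrow> inner_pairs_avoid (y # L) []"
    using L by (intro cyc_avoids_v1342_hd_max) (simp add: less_imp_le)
  have "y < last H"
    using H \<open>H \<noteq> []\<close> by simp
  then have "\<not> starts_with_v1342 (last H # y # L @ butlast H)"
    by simp
  then show ?thesis
    using cyc_avoids_v1342_append[of "y # L" H] \<open>L \<noteq> []\<close> \<open>H \<noteq> []\<close>
      inner_L inner_H junction avoids_L cyc_avoids_v1342_hd_max[of H] H'
    by auto
qed

lemma cyc_avoids_v1342_Cons_Cons_split:
  assumes w: "\<forall>x\<in>set w. a < x \<and> x \<noteq> y" and "a < y"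
    and low: "\<exists>l\<in>set w. l < y" and high: "\<exists>h\<in>set w. y < h"
  shows "cyc_avoids_v1342 (a # y # w) \<longleftrightarrow>
    (\<exists>L H. w = L @ H \<and> (\<forall>l\<in>set L. l < y) \<and> (\<forall>h\<in>set H. y < h) \<and>
       cyc_avoids_v1342 (y # L) \<and> (\<forall>h\<in>set H. h \<le> hd H) \<and> cyc_avoids_v1342 H)"
    (is "_ \<longleftrightarrow> ?split")
proof -
  have split_iff: "cyc_avoids_v1342 (y # L @ H) \<longleftrightarrow>
      cyc_avoids_v1342 (y # L) \<and> (\<forall>h\<in>set H. h \<le> hd H) \<and> cyc_avoids_v1342 H"
    if "w = L @ H" "\<forall>l\<in>set L. l < y" "\<forall>h\<in>set H. y < h" for L H
  proof (rule cyc_avoids_v1342_split)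
    show "L \<noteq> []" using low that by auto
    show "H \<noteq> []" using high that by auto
  qed (use that in auto)
  have "cyc_avoids_v1342 (a # y # w) \<longleftrightarrow> cyc_avoids_v1342 (y # w) \<and> \<not> completes_v1342 a y w"
    using cyc_avoids_v1342_Cons_min[of "y # w" a] w \<open>a < y\<close> by auto
  also have "\<dots> \<longleftrightarrow> cyc_avoids_v1342 (y # w) \<and>
      (\<exists>L H. w = L @ H \<and> (\<forall>l\<in>set L. l < y) \<and> (\<forall>h\<in>set H. y < h))"
    using not_completes_v1342_iff_split[OF w] by simp
  also have "\<dots> \<longleftrightarrow> ?split"
  proof
    assume "cyc_avoids_v1342 (y # w) \<and>
      (\<exists>L H. w = L @ H \<and> (\<forall>l\<in>set L. l < y) \<and> (\<forall>h\<in>set H. y < h))"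
    then obtain L H where "cyc_avoids_v1342 (y # L @ H)" "w = L @ H"
      "\<forall>l\<in>set L. l < y" "\<forall>h\<in>set H. y < h"
      by auto
    with split_iff show ?split by blast
  next
    assume ?split
    then obtain L H where "w = L @ H" "\<forall>l\<in>set L. l < y" "\<forall>h\<in>set H. y < h"
      "cyc_avoids_v1342 (y # L)" "\<forall>h\<in>set H. h \<le> hd H" "cyc_avoids_v1342 H"
      by blast
    with split_iff show "cyc_avoids_v1342 (y # w) \<and>
      (\<exists>L H. w = L @ H \<and> (\<forall>l\<in>set L. l < y) \<and> (\<forall>h\<in>set H. y < h))"
      by blast
  qed
  finally show ?thesis .
qed

section \<open>Counting\<close>

definition cyc_avoiders_from :: "nat set \<Rightarrow> nat \<Rightarrow> nat list set" where
  "cyc_avoiders_from S m = {xs \<in> permutations_of_set S. hd xs = m \<and> cyc_avoids_v1342 xs}"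

definition avoiding_classes :: "nat set \<Rightarrow> nat list set set" where
  "avoiding_classes S =
     {cyc_class xs | xs. xs \<in> permutations_of_set S \<and> cyc_avoids_v1342 xs}"

lemma Av_cyc_v1342_eq: "Av_cyc_v1342 n = avoiding_classes {1..n}"
  by (simp add: Av_cyc_v1342_def avoiding_classes_def cyc_avoids_v1342_iff)

lemma cyc_class_self: "xs \<in> cyc_class xs"
  unfolding cyc_class_def by (auto intro: exI[of _ 0])

lemma cyc_class_rotate: "cyc_class (rotate i xs) = cyc_class xs"
proof -
  have rotate_eq: "rotate k xs = rotate (k + (length xs - 1) * i) (rotate i xs)" for k
  proof (cases "xs = []")
    case False
    have "rotate k xs = rotate (k mod length xs) xs"
      by (rule rotate_conv_mod)
    also have "\<dots> = rotate ((k + i * length xs) mod length xs) xs"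
      by simp
    also have "\<dots> = rotate (k + i * length xs) xs"
      by (rule rotate_conv_mod[symmetric])
    also have "k + i * length xs = k + (length xs - 1) * i + i"
      using False by (cases "length xs") auto
    finally show ?thesis
      by (simp only: rotate_rotate)
  qed simp
  show ?thesis
    unfolding cyc_class_def
  proof (intro set_eqI iffI)
    fix ys
    assume "ys \<in> {rotate k (rotate i xs) |k. True}"
    then show "ys \<in> {rotate k xs |k. True}"
      by (auto simp: rotate_rotate)
  next
    fix ys
    assume "ys \<in> {rotate k xs |k. True}"
    then obtain k where "ys = rotate k xs"
      by blast
    with rotate_eq[of k] show "ys \<in> {rotate k (rotate i xs) |k. True}"
      by blast
  qed
qed

lemma distinct_rotate_hd_eq:
  assumes "distinct xs" "hd (rotate k xs) = hd xs"
  shows "rotate k xs = xs"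
proof (cases "xs = []")
  case False
  then have "xs ! (k mod length xs) = xs ! 0"
    using assms(2) hd_rotate_conv_nth[OF False, of k] hd_conv_nth[OF False] by simp
  then have "k mod length xs = 0"
    using assms(1) False by (simp add: nth_eq_iff_index_eq)
  then show ?thesis
    by simp
qed simp

lemma ex_rotate_hd: "m \<in> set xs \<Longrightarrow> \<exists>i. hd (rotate i xs) = m"
proof -
  assume "m \<in> set xs"
  then obtain i where "i < length xs" "xs ! i = m"
    by (auto simp: in_set_conv_nth)
  moreover from this have "xs \<noteq> []"
    by auto
  ultimately show ?thesis
    using hd_rotate_conv_nth[of xs i] by auto
qed

lemma inj_on_cyc_class_hd: "inj_on cyc_class {xs. distinct xs \<and> hd xs = m}"
proof (rule inj_onI)
  fix xs ys
  assume xs: "xs \<in> {xs. distinct xs \<and> hd xs = m}" and ys: "ys \<in> {xs. distinct xs \<and> hd xs = m}"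
    and "cyc_class xs = cyc_class ys"
  then have "xs \<in> cyc_class ys"
    using cyc_class_self[of xs] by simp
  then obtain k where "xs = rotate k ys"
    unfolding cyc_class_def by auto
  with xs ys show "xs = ys"
    using distinct_rotate_hd_eq[of ys k] by simp
qed

lemma avoiding_classes_eq_image:
  assumes "m \<in> S"
  shows "avoiding_classes S = cyc_class ` cyc_avoiders_from S m"
proof
  show "cyc_class ` cyc_avoiders_from S m \<subseteq> avoiding_classes S"
    unfolding cyc_avoiders_from_def avoiding_classes_def by blast
next
  show "avoiding_classes S \<subseteq> cyc_class ` cyc_avoiders_from S m"
  proof
    fix C
    assume "C \<in> avoiding_classes S"
    then obtain xs where C: "C = cyc_class xs"
      and xs: "xs \<in> permutations_of_set S" "cyc_avoids_v1342 xs"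
      unfolding avoiding_classes_def by blast
    then obtain i where "hd (rotate i xs) = m"
      using assms ex_rotate_hd[of m xs] by (auto simp: permutations_of_set_def)
    then have "rotate i xs \<in> cyc_avoiders_from S m"
      using xs cyc_avoids_v1342_rotate[of i xs]
      by (simp add: cyc_avoiders_from_def permutations_of_set_def)
    moreover have "C = cyc_class (rotate i xs)"
      using C cyc_class_rotate by simp
    ultimately show "C \<in> cyc_class ` cyc_avoiders_from S m"
      by blast
  qed
qed

lemma card_avoiding_classes:
  assumes "m \<in> S"
  shows "card (avoiding_classes S) = card (cyc_avoiders_from S m)"
proof -
  have "cyc_avoiders_from S m \<subseteq> {xs. distinct xs \<and> hd xs = m}"
    by (auto simp: cyc_avoiders_from_def permutations_of_set_def)
  then show ?thesis
    using assms inj_on_subset[OF inj_on_cyc_class_hd] by (simp add: avoiding_classes_eq_image card_image)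
qed

lemma card_append_image:
  assumes "\<forall>u\<in>U. length u = n"
  shows "card ((\<lambda>(u, v). u @ v) ` (U \<times> V)) = card U * card V"
proof -
  have "inj_on (\<lambda>(u, v). u @ v) (U \<times> V)"
    using assms by (auto intro!: inj_onI simp: append_eq_append_conv)
  then show ?thesis
    by (simp add: card_image card_cartesian_product)
qed

lemma append_in_permutations_of_set_interval_iff:
  assumes "\<forall>x\<in>set u. x \<le> y" "\<forall>x\<in>set v. y < x" "c \<le> Suc y" "y \<le> d"
  shows "u @ v \<in> permutations_of_set {c..d} \<longleftrightarrow>
    u \<in> permutations_of_set {c..y} \<and> v \<in> permutations_of_set {Suc y..d}"
proof
  assume "u @ v \<in> permutations_of_set {c..d}"
  then have uv: "set u \<union> set v = {c..d}" "distinct (u @ v)"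
    by (simp_all add: permutations_of_set_def)
  have "set u = (set u \<union> set v) \<inter> {..y}"
    using assms(1,2) by auto
  also have "\<dots> = {c..y}"
    using uv(1) assms(4) by auto
  finally have set_u: "set u = {c..y}" .
  have "set v = (set u \<union> set v) \<inter> {Suc y..}"
    using assms(1,2) by auto
  also have "\<dots> = {Suc y..d}"
    using uv(1) assms(3) by auto
  finally have set_v: "set v = {Suc y..d}" .
  from set_u set_v show "u \<in> permutations_of_set {c..y} \<and> v \<in> permutations_of_set {Suc y..d}"
    using uv(2) by (simp add: permutations_of_set_def)
next
  assume "u \<in> permutations_of_set {c..y} \<and> v \<in> permutations_of_set {Suc y..d}"
  then have "set u = {c..y}" "set v = {Suc y..d}" "distinct u" "distinct v"
    by (simp_all add: permutations_of_set_def)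
  moreover have "{c..y} \<union> {Suc y..d} = {c..d}"
    using assms(3,4) by auto
  ultimately show "u @ v \<in> permutations_of_set {c..d}"
    by (auto simp: permutations_of_set_def)
qed

definition avoiding_tails :: "nat \<Rightarrow> nat \<Rightarrow> nat \<Rightarrow> nat list set" where
  "avoiding_tails a b y =
     {B \<in> permutations_of_set {Suc a..b}. hd B = y \<and> cyc_avoids_v1342 (a # B)}"

lemma cyc_avoiders_from_min_eq:
  assumes "a \<le> b"
  shows "cyc_avoiders_from {a..b} a =
    Cons a ` {B \<in> permutations_of_set {Suc a..b}. cyc_avoids_v1342 (a # B)}"
proof (intro set_eqI iffI)
  fix xs
  assume xs: "xs \<in> cyc_avoiders_from {a..b} a"
  then obtain B where B: "xs = a # B"
    using assms by (cases xs) (auto simp: cyc_avoiders_from_def permutations_of_set_def)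
  with xs have "insert a (set B) = {a..b}" "a \<notin> set B"
    and B_props: "distinct B" "cyc_avoids_v1342 (a # B)"
    by (auto simp: cyc_avoiders_from_def permutations_of_set_def)
  with assms have "set B = {Suc a..b}"
    using atLeastAtMost_insertL[of a b] insert_ident[of a "set B" "{Suc a..b}"] by simp
  with B B_props show "xs \<in> Cons a ` {B \<in> permutations_of_set {Suc a..b}. cyc_avoids_v1342 (a # B)}"
    by (intro image_eqI[of _ _ B]) (simp_all add: permutations_of_set_def)
next
  fix xs
  assume "xs \<in> Cons a ` {B \<in> permutations_of_set {Suc a..b}. cyc_avoids_v1342 (a # B)}"
  then obtain B where "xs = a # B" "B \<in> permutations_of_set {Suc a..b}" "cyc_avoids_v1342 (a # B)"
    by blast
  with assms show "xs \<in> cyc_avoiders_from {a..b} a"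
    using atLeastAtMost_insertL[of a b] by (simp add: cyc_avoiders_from_def permutations_of_set_def)
qed

lemma card_cyc_avoiders_from_min:
  assumes "a < b"
  shows "card (cyc_avoiders_from {a..b} a) = (\<Sum>y = Suc a..b. card (avoiding_tails a b y))"
proof -
  let ?T = "{B \<in> permutations_of_set {Suc a..b}. cyc_avoids_v1342 (a # B)}"
  have "card (cyc_avoiders_from {a..b} a) = card ?T"
    using assms by (simp add: cyc_avoiders_from_min_eq card_image)
  also have "\<dots> = (\<Sum>y = Suc a..b. card {B \<in> ?T. hd B = y})"
  proof -
    have "hd B \<in> {Suc a..b}" if "B \<in> permutations_of_set {Suc a..b}" for B
    proof -
      have "set B = {Suc a..b}"
        using that by (simp add: permutations_of_set_def)
      moreover from this have "B \<noteq> []"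
        using assms by auto
      ultimately show ?thesis
        by (metis hd_in_set)
    qed
    then have "hd ` ?T \<subseteq> {Suc a..b}"
      by blast
    then show ?thesis
      using sum.group[of ?T "{Suc a..b}" hd "\<lambda>_. 1::nat"] by simp
  qed
  also have "\<dots> = (\<Sum>y = Suc a..b. card (avoiding_tails a b y))"
    unfolding avoiding_tails_def by (intro sum.cong) (auto intro: arg_cong[where f = card])
  finally show ?thesis .
qed

lemma avoiding_tails_Suc:
  assumes "a < b"
  shows "avoiding_tails a b (Suc a) = cyc_avoiders_from {Suc a..b} (Suc a)"
proof -
  have "cyc_avoids_v1342 (a # B) \<longleftrightarrow> cyc_avoids_v1342 B"
    if "B \<in> permutations_of_set {Suc a..b}" "hd B = Suc a" for B
  proof -
    have "\<forall>x\<in>set B. a < x" "B \<noteq> []"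
      using that assms by (auto simp: permutations_of_set_def)
    moreover have "\<not> completes_v1342 a (Suc a) (tl B)"
      using completes_v1342_between by fastforce
    ultimately show ?thesis
      using cyc_avoids_v1342_Cons_min \<open>hd B = Suc a\<close> by metis
  qed
  then show ?thesis
    unfolding avoiding_tails_def cyc_avoiders_from_def by blast
qed

lemma avoiding_tails_max:
  assumes "a < b"
  shows "avoiding_tails a b b = cyc_avoiders_from {Suc a..b} b"
proof -
  have "cyc_avoids_v1342 (a # B) \<longleftrightarrow> cyc_avoids_v1342 B"
    if "B \<in> permutations_of_set {Suc a..b}" "hd B = b" for B
  proof -
    have "\<forall>x\<in>set B. a < x" "B \<noteq> []"
      using that assms by (auto simp: permutations_of_set_def)
    moreover have "\<forall>x\<in>set (tl B). x \<le> b"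
      using that by (cases B) (auto simp: permutations_of_set_def)
    then have "\<not> completes_v1342 a b (tl B)"
      by (meson completes_v1342_above leD)
    ultimately show ?thesis
      using cyc_avoids_v1342_Cons_min \<open>hd B = b\<close> by metis
  qed
  then show ?thesis
    unfolding avoiding_tails_def cyc_avoiders_from_def by blast
qed

lemma avoiding_tails_between_subset:
  assumes "Suc a < y" "y < b"
  shows "avoiding_tails a b y \<subseteq>
    (\<lambda>(u, v). u @ v) ` (cyc_avoiders_from {Suc a..y} y \<times> cyc_avoiders_from {Suc y..b} b)"
proof
  fix B
  assume "B \<in> avoiding_tails a b y"
  then have B: "B \<in> permutations_of_set {Suc a..b}" "hd B = y" "cyc_avoids_v1342 (a # B)"
    by (simp_all add: avoiding_tails_def)
  then obtain w where Bw: "B = y # w"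
    using assms by (cases B) (auto simp: permutations_of_set_def)
  have w: "\<forall>x\<in>set w. a < x \<and> x \<noteq> y"
    using B(1) Bw by (auto simp: permutations_of_set_def)
  have "Suc a \<in> set B" "b \<in> set B"
    using B(1) assms by (simp_all add: permutations_of_set_def)
  then have low: "\<exists>l\<in>set w. l < y" and high: "\<exists>h\<in>set w. y < h"
    using Bw assms by auto
  obtain L H where LH: "w = L @ H" "\<forall>l\<in>set L. l < y" "\<forall>h\<in>set H. y < h"
      "cyc_avoids_v1342 (y # L)" "\<forall>h\<in>set H. h \<le> hd H" "cyc_avoids_v1342 H"
    using B(3) Bw cyc_avoids_v1342_Cons_Cons_split[OF w _ low high] assms by auto
  have "(y # L) @ H \<in> permutations_of_set {Suc a..b}"
    using B(1) Bw LH(1) by simp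
  moreover have "\<forall>x\<in>set (y # L). x \<le> y"
    using LH(2) by (simp add: less_imp_le)
  ultimately have perm: "y # L \<in> permutations_of_set {Suc a..y}" "H \<in> permutations_of_set {Suc y..b}"
    using append_in_permutations_of_set_interval_iff[of "y # L" y H "Suc a" b] LH(3) assms
    by simp_all
  have "b \<in> set H"
    using perm(2) assms by (simp add: permutations_of_set_def)
  then have "hd H \<in> set H"
    by (cases H) auto
  then have "hd H = b"
    using perm(2) LH(5) \<open>b \<in> set H\<close> by (auto simp: permutations_of_set_def intro: antisym)
  then show "B \<in> (\<lambda>(u, v). u @ v) ` (cyc_avoiders_from {Suc a..y} y \<times> cyc_avoiders_from {Suc y..b} b)"
    using perm LH Bw by (intro image_eqI[of _ _ "(y # L, H)"]) (auto simp: cyc_avoiders_from_def)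
qed

lemma avoiding_tails_between_supset:
  assumes "Suc a < y" "y < b"
  shows "(\<lambda>(u, v). u @ v) ` (cyc_avoiders_from {Suc a..y} y \<times> cyc_avoiders_from {Suc y..b} b)
    \<subseteq> avoiding_tails a b y"
proof clarify
  fix u H
  assume u: "u \<in> cyc_avoiders_from {Suc a..y} y" and H: "H \<in> cyc_avoiders_from {Suc y..b} b"
  then have u_props: "set u = {Suc a..y}" "distinct u" "hd u = y" "cyc_avoids_v1342 u"
    and H_props: "set H = {Suc y..b}" "hd H = b" "cyc_avoids_v1342 H"
    by (simp_all add: cyc_avoiders_from_def permutations_of_set_def)
  then obtain L where L: "u = y # L"
    using assms by (cases u) auto
  have "\<forall>l\<in>set L. l \<in> set u \<and> l \<noteq> y"
    using u_props(2) L by auto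
  then have L_below: "\<forall>l\<in>set L. l < y"
    using u_props(1) by fastforce
  have H_above: "\<forall>h\<in>set H. y < h" and H_max: "\<forall>h\<in>set H. h \<le> hd H"
    using H_props by auto
  have "u @ H \<in> permutations_of_set {Suc a..b}"
    using append_in_permutations_of_set_interval_iff[of u y H "Suc a" b] u H L L_below H_above assms
    by (auto simp: cyc_avoiders_from_def less_imp_le)
  moreover have w: "\<forall>x\<in>set (L @ H). a < x \<and> x \<noteq> y"
    using u_props H_props L assms by auto
  moreover have "Suc a \<in> set (L @ H)" "b \<in> set (L @ H)"
    using u_props H_props L assms by auto
  then have low: "\<exists>l\<in>set (L @ H). l < y" and high: "\<exists>h\<in>set (L @ H). y < h"
    using assms by blast+
  have "cyc_avoids_v1342 (a # y # L @ H)"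
    unfolding cyc_avoids_v1342_Cons_Cons_split[OF w Suc_lessD[OF assms(1)] low high]
    using L_below H_above H_max u_props(4) H_props(3) L by blast
  ultimately show "u @ H \<in> avoiding_tails a b y"
    using L by (simp add: avoiding_tails_def)
qed

lemma avoiding_tails_between:
  assumes "Suc a < y" "y < b"
  shows "avoiding_tails a b y =
    (\<lambda>(u, v). u @ v) ` (cyc_avoiders_from {Suc a..y} y \<times> cyc_avoiders_from {Suc y..b} b)"
  using avoiding_tails_between_subset[OF assms] avoiding_tails_between_supset[OF assms] by blast

lemma card_cyc_avoiders_from_interval:
  assumes "2 \<le> k"
  shows "card (cyc_avoiders_from {a..a + k} a) =
    card (cyc_avoiders_from {Suc a..a + k} (Suc a)) + card (cyc_avoiders_from {Suc a..a + k} (a + k)) +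
    (\<Sum>j = 2..k - 1. card (cyc_avoiders_from {Suc a..a + j} (a + j)) *
                     card (cyc_avoiders_from {Suc (a + j)..a + k} (a + k)))"
proof -
  let ?t = "\<lambda>y. card (avoiding_tails a (a + k) y)"
  have split: "{Suc a..a + k} = insert (Suc a) (insert (a + k) {2 + a..k - 1 + a})"
    using assms by auto
  have "card (cyc_avoiders_from {a..a + k} a) = (\<Sum>y = Suc a..a + k. ?t y)"
    using assms by (simp add: card_cyc_avoiders_from_min)
  also have "\<dots> = ?t (Suc a) + ?t (a + k) + (\<Sum>y = 2 + a..k - 1 + a. ?t y)"
    unfolding split using assms by simp
  also have "(\<Sum>y = 2 + a..k - 1 + a. ?t y) = (\<Sum>j = 2..k - 1. ?t (j + a))"
    by (rule sum.shift_bounds_cl_nat_ivl)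
  also have "\<dots> = (\<Sum>j = 2..k - 1. card (cyc_avoiders_from {Suc a..a + j} (a + j)) *
                     card (cyc_avoiders_from {Suc (a + j)..a + k} (a + k)))"
  proof (rule sum.cong)
    fix j
    assume j: "j \<in> {2..k - 1}"
    have "\<forall>u\<in>cyc_avoiders_from {Suc a..a + j} (a + j). length u = j"
      by (auto simp: cyc_avoiders_from_def length_finite_permutations_of_set)
    then show "?t (j + a) = card (cyc_avoiders_from {Suc a..a + j} (a + j)) *
        card (cyc_avoiders_from {Suc (a + j)..a + k} (a + k))"
      using j avoiding_tails_between[of a "a + j" "a + k"] card_append_image
      by (auto simp: add.commute)
  qed simp
  finally show ?thesis
    using assms by (simp add: avoiding_tails_Suc avoiding_tails_max)
qed

declare D.simps [simp del]

lemma D_recurrence: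
  assumes "2 \<le> k"
  shows "D (k + 2) = 2 * D (k + 1) + (\<Sum>j = 2..k - 1. D (j + 1) * D (k - j + 1))"
proof -
  have "D (k + 2) = (\<Sum>i = 1..k - 1. D i * D (k + 2 - i))"
    using assms by (subst D.simps) simp
  also have "\<dots> = D 1 * D (k + 1) + (\<Sum>i = 2..k - 1. D i * D (k + 2 - i))"
    using assms by (simp add: sum.atLeast_Suc_atMost numeral_2_eq_2)
  also have "(\<Sum>i = 2..k - 1. D i * D (k + 2 - i)) = (\<Sum>j = 2..k - 1. D (k - j + 1) * D (j + 1))"
    using assms by (subst sum.atLeastAtMost_rev) (intro sum.cong; auto simp: Suc_diff_le)
  also have "D 1 = 2"
    by (simp add: D.simps)
  finally show ?thesis
    by (simp add: mult.commute)
qed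

lemma card_avoiding_classes_interval: "card (avoiding_classes {a..a + k}) = D (k + 2)"
proof (induction k arbitrary: a rule: less_induct)
  case (less k)
  have IH: "card (cyc_avoiders_from {c..d} m) = D (d - c + 2)"
    if "d - c < k" "c \<le> m" "m \<le> d" for c d m
    using less.IH[of "d - c" c] card_avoiding_classes[of m "{c..d}"] that by simp
  consider "k = 0" | "k = 1" | "2 \<le> k"
    by linarith
  then show ?case
  proof cases
    case 1
    have "cyc_avoids_v1342 [a]"
      by (simp add: cyc_avoids_v1342_def)
    then have "cyc_avoiders_from {a} a = {[a]}"
      by (auto simp: cyc_avoiders_from_def)
    then show ?thesis
      using 1 card_avoiding_classes[of a "{a}"] by (simp add: D.simps)
  next
    case 2
    have "card (avoiding_classes {a..a + k}) = card (cyc_avoiders_from {a..Suc a} a)"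
      using 2 by (simp add: card_avoiding_classes)
    also have "\<dots> = card (cyc_avoiders_from {Suc a..Suc a} (Suc a))"
      by (simp add: card_cyc_avoiders_from_min avoiding_tails_Suc)
    also have "\<dots> = D 2"
      using 2 IH[of "Suc a" "Suc a" "Suc a"] by (simp add: numeral_2_eq_2)
    finally show ?thesis
      using 2 by (simp add: D.simps)
  next
    case 3
    have "card (avoiding_classes {a..a + k}) = card (cyc_avoiders_from {a..a + k} a)"
      by (simp add: card_avoiding_classes)
    also have "\<dots> = D (k + 1) + D (k + 1) + (\<Sum>j = 2..k - 1. D (j + 1) * D (k - j + 1))"
      using 3 by (simp add: card_cyc_avoiders_from_interval IH)
        (intro sum.cong; auto simp: IH Suc_diff_Suc)
    also have "\<dots> = D (k + 2)"
      using D_recurrence[OF 3] by simp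
    finally show ?thesis .
  qed
qed

theorem theorem5p5:
  fixes n :: nat
  assumes "n \<ge> 1"
  shows "card (Av_cyc_v1342 n) = D (n + 1)"
  using card_avoiding_classes_interval[of 1 "n - 1"] assms by (simp add: Av_cyc_v1342_eq)

end
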